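(* Let $R$ be a commutative Noetherian ring with unity such that $\Gamma_E(R)$ is a fan graph with at least four vertices. Then: (1) $R$ has exactly one associated prime $\mathfrak p$, i.e. $\operatorname{Ass}(R)=\{\mathfrak p\}$; (2) $\mathfrak p^3=0$; (3) the characteristic of $R$ is $2$, $4$, or $8$.
   Context: For $x,y\in R$ write $x\sim y$ iff $\operatorname{ann}(x)=\operatorname{ann}(y)$; $[x]$ denotes the equivalence class of $x$. Let $Z^*(R)$ be the set of nonzero zero divisors of $R$. The graph $\Gamma_E(R)$ is the simple graph whose vertices are the classes $[x]$ with $x\in Z^*(R)$, two distinct vertices $[x],[y]$ being adjacent iff $xy=0$. A fan graph is a complete bipartite graph $K_{n,1}$ with $n\in\mathbb N\cup\{\infty\}$ (one central vertex adjacent to all others, and no other edges). $\operatorname{Ass}(R)$ is the set of prime ideals of the form $\operatorname{ann}(y)$, $y\in R$. *)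

theory Defs
  imports "HOL-Algebra.Ring_Divisibility" "HOL-Algebra.Ideal_Product"
begin

definition ann :: "('a, 'b) ring_scheme \<Rightarrow> 'a \<Rightarrow> 'a set" where
  "ann R x = {r \<in> carrier R. r \<otimes>\<^bsub>R\<^esub> x = \<zero>\<^bsub>R\<^esub>}"

definition zdiv_star :: "('a, 'b) ring_scheme \<Rightarrow> 'a set" where
  "zdiv_star R = {x \<in> carrier R. x \<noteq> \<zero>\<^bsub>R\<^esub> \<and>
      (\<exists>y \<in> carrier R. y \<noteq> \<zero>\<^bsub>R\<^esub> \<and> x \<otimes>\<^bsub>R\<^esub> y = \<zero>\<^bsub>R\<^esub>)}"

definition ann_class :: "('a, 'b) ring_scheme \<Rightarrow> 'a \<Rightarrow> 'a set" where
  "ann_class R x = {y \<in> carrier R. ann R y = ann R x}"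

definition GE_vertices :: "('a, 'b) ring_scheme \<Rightarrow> 'a set set" where
  "GE_vertices R = ann_class R ` zdiv_star R"

definition GE_adj :: "('a, 'b) ring_scheme \<Rightarrow> 'a set \<Rightarrow> 'a set \<Rightarrow> bool" where
  "GE_adj R A B \<longleftrightarrow> A \<noteq> B \<and> (\<exists>x \<in> A. \<exists>y \<in> B. x \<otimes>\<^bsub>R\<^esub> y = \<zero>\<^bsub>R\<^esub>)"

text \<open>Gamma_E(R) is a fan graph K_{n,1} (n finite or infinite): some central vertex
  adjacent to all other vertices, and no other edges.\<close>
definition GE_fan :: "('a, 'b) ring_scheme \<Rightarrow> bool" where
  "GE_fan R \<longleftrightarrow> (\<exists>c \<in> GE_vertices R. \<forall>A \<in> GE_vertices R. \<forall>B \<in> GE_vertices R.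
      GE_adj R A B \<longleftrightarrow> (A \<noteq> B \<and> (A = c \<or> B = c)))"

definition Ass :: "('a, 'b) ring_scheme \<Rightarrow> 'a set set" where
  "Ass R = {P. primeideal P R \<and> (\<exists>y \<in> carrier R. P = ann R y)}"

definition ring_char :: "('a, 'b) ring_scheme \<Rightarrow> nat" where
  "ring_char R = (if \<exists>n::nat. n > 0 \<and> add_pow R n \<one>\<^bsub>R\<^esub> = \<zero>\<^bsub>R\<^esub>
     then (LEAST n::nat. n > 0 \<and> add_pow R n \<one>\<^bsub>R\<^esub> = \<zero>\<^bsub>R\<^esub>) else 0)"

end

theory Submission
  imports Defs
begin

text \<open>Let \<open>[c]\<close> be the centre of the fan. Every noncentral zero divisor kills \<open>c\<close>, and
  \<open>c^2 = 0\<close>: otherwise \<open>d + c\<close> lies in the central class for every noncentral \<open>d\<close>, which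
  forces two noncentral classes to have the same annihilator. Hence \<open>c\<close> kills all zero divisors
  and \<open>ann(c)\<close> is prime. A noncentral \<open>d\<close> with \<open>d^2 \<noteq> 0\<close> has \<open>ann(d) = [c] \<union> {0}\<close>, so at
  most one noncentral class has nonzero square; this pins down \<open>Ass(R) = {ann(c)}\<close> and yields
  noncentral \<open>e, f\<close> in different classes with \<open>e^2 = f^2 = 0\<close>. Whatever both \<open>e\<close> and \<open>f\<close>
  kill lies in \<open>[c] \<union> {0}\<close>, which gives \<open>ann(c)^2 \<subseteq> [c] \<union> {0}\<close> and so \<open>ann(c)^3 = 0\<close>.
  Finally \<open>(e + f)(e - f) = 0\<close> forces \<open>(e + f)^2 = 2ef = 0\<close> with \<open>ef\<close> central, so
  \<open>2 \<in> ann(c)\<close> and \<open>8 = 2^3 = 0\<close>.\<close>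

lemma (in ring) add_pow_one_eq_zero_iff:
  "add_pow R (n::nat) \<one> = \<zero> \<longleftrightarrow> ring_char R dvd n"
proof (cases "\<exists>k::nat. k > 0 \<and> add_pow R k \<one> = \<zero>")
  case False
  then have "ring_char R = 0" unfolding ring_char_def by (simp only: False if_False)
  moreover have "add_pow R n \<one> \<noteq> \<zero>" if "n > 0"
    using False that by blast
  ultimately show ?thesis by (cases "n = 0") auto
next
  case True
  define m where "m = ring_char R"
  have m: "m > 0" "add_pow R m \<one> = \<zero>"
    using LeastI_ex[OF True] True by (simp_all add: m_def ring_char_def)
  have minimal: "add_pow R k \<one> \<noteq> \<zero>" if "0 < k" "k < m" for k :: nat
    using not_less_Least[of k "\<lambda>k. k > 0 \<and> add_pow R k \<one> = \<zero>"] that True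
    by (auto simp: m_def ring_char_def)
  have multiple: "add_pow R (q * m) \<one> = \<zero>" for q :: nat
    by (simp add: add.nat_pow_pow[symmetric] mult.commute m(2))
  have "add_pow R n \<one> = add_pow R (n mod m) \<one>"
    using add.nat_pow_mult[of \<one> "n div m * m" "n mod m"] multiple[of "n div m"] by simp
  then show ?thesis
    using minimal[of "n mod m"] m(1) multiple[of "n div m"]
    by (auto simp: m_def[symmetric] dvd_eq_mod_eq_0)
qed

lemma (in ring) ring_char_in_2_4_8:
  assumes "\<one> \<noteq> \<zero>" and "add_pow R (8::nat) \<one> = \<zero>"
  shows "ring_char R \<in> {2, 4, 8}"
proof -
  have "ring_char R dvd 8" "ring_char R \<noteq> 1"
    using assms add_pow_one_eq_zero_iff[of 8] add_pow_one_eq_zero_iff[of 1] by auto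
  moreover have "d \<in> {1, 2, 4, 8}" if "d dvd (8::nat)" for d
  proof -
    have "d \<le> 8" using that by (simp add: dvd_imp_le)
    then have "d \<in> {0, 1, 2, 3, 4, 5, 6, 7, 8}" by auto
    then show ?thesis using that by (auto simp: dvd_eq_mod_eq_0)
  qed
  ultimately show ?thesis by blast
qed

lemma (in ring) ideal_triple_prod_eq_zero:
  assumes "ideal I R" and "\<And>a b d. a \<in> I \<Longrightarrow> b \<in> I \<Longrightarrow> d \<in> I \<Longrightarrow> a \<otimes> b \<otimes> d = \<zero>"
  shows "I \<cdot> I \<cdot> I = {\<zero>}"
proof
  have square: "s \<in> carrier R \<and> (\<forall>d \<in> I. s \<otimes> d = \<zero>)" if "s \<in> I \<cdot> I" for s
    using that
  proof (induction s rule: ideal_prod.induct)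
    case (prod a b)
    then show ?case using assms ideal.Icarr by fastforce
  next
    case (sum s1 s2)
    then show ?case using assms(1) ideal.Icarr by (fastforce simp: l_distr)
  qed
  show "I \<cdot> I \<cdot> I \<subseteq> {\<zero>}"
  proof
    fix s assume "s \<in> I \<cdot> I \<cdot> I"
    then show "s \<in> {\<zero>}"
      by (induction s rule: ideal_prod.induct) (auto dest: square)
  qed
  show "{\<zero>} \<subseteq> I \<cdot> I \<cdot> I"
    using assms(1) by (simp add: additive_subgroup.zero_closed ideal.axioms(1) ideal_prod_is_ideal)
qed

lemma (in ring) add_pow_one_mult:
  "add_pow R (m::nat) \<one> \<otimes> add_pow R (n::nat) \<one> = add_pow R (m * n) \<one>"
  by (simp add: add_pow_ldistr add.nat_pow_pow mult.commute)

lemma obtain_three_other_elements: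
  assumes "c \<in> V" and "infinite V \<or> card V \<ge> 4"
  obtains a b d where "{a, b, d} \<subseteq> V - {c}" "a \<noteq> b" "a \<noteq> d" "b \<noteq> d"
proof -
  obtain B where B: "card B = 3" "B \<subseteq> V - {c}"
  proof (cases "finite V")
    case False
    then show ?thesis using that infinite_arbitrarily_large[of "V - {c}" 3] by auto
  next
    case True
    then have "3 \<le> card (V - {c})" using assms by (simp add: card_Diff_singleton)
    then show ?thesis using that obtain_subset_with_card_n by metis
  qed
  then show ?thesis using that by (auto simp: card_3_iff)
qed

context cring
begin

lemma mem_ann: "r \<in> ann R x \<longleftrightarrow> r \<in> carrier R \<and> r \<otimes> x = \<zero>"
  by (simp add: ann_def)

lemma zdiv_starI:
  "x \<in> carrier R \<Longrightarrow> x \<noteq> \<zero> \<Longrightarrow> y \<in> carrier R \<Longrightarrow> y \<noteq> \<zero> \<Longrightarrow> x \<otimes> y = \<zero> \<Longrightarrow> x \<in> zdiv_star R"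
  unfolding zdiv_star_def by blast

lemma zdiv_starD: "x \<in> zdiv_star R \<Longrightarrow> x \<in> carrier R \<and> x \<noteq> \<zero>"
  unfolding zdiv_star_def by blast

lemma ideal_ann:
  assumes x: "x \<in> carrier R"
  shows "ideal (ann R x) R"
proof (rule idealI[OF ring_axioms])
  show "subgroup (ann R x) (add_monoid R)"
  proof (rule add.subgroupI)
    show "ann R x \<subseteq> carrier R" "ann R x \<noteq> {}"
      using x by (auto simp: ann_def intro!: exI[of _ \<zero>])
    show "\<ominus> a \<in> ann R x" if "a \<in> ann R x" for a
      using that x by (simp add: ann_def l_minus)
    show "a \<oplus> b \<in> ann R x" if "a \<in> ann R x" "b \<in> ann R x" for a b
      using that x by (simp add: ann_def l_distr)
  qed
  show "y \<otimes> a \<in> ann R x" "a \<otimes> y \<in> ann R x" if "a \<in> ann R x" "y \<in> carrier R" for a y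
    using that x by (auto simp: ann_def m_assoc) (metis m_assoc m_comm r_null)
qed

lemma ann_class_eq_iff:
  "x \<in> carrier R \<Longrightarrow> y \<in> carrier R \<Longrightarrow> ann_class R x = ann_class R y \<longleftrightarrow> ann R x = ann R y"
  unfolding ann_class_def by blast

lemma GE_adj_ann_class_iff:
  assumes "x \<in> carrier R" "y \<in> carrier R"
  shows "GE_adj R (ann_class R x) (ann_class R y) \<longleftrightarrow> ann R x \<noteq> ann R y \<and> x \<otimes> y = \<zero>"
proof -
  have "x \<otimes> y = \<zero>" if "x' \<in> ann_class R x" "y' \<in> ann_class R y" "x' \<otimes> y' = \<zero>" for x' y'
  proof -
    have "x' \<in> ann R y'" using that by (auto simp: ann_class_def ann_def m_comm)
    then have "x' \<in> ann R y" using that(2) by (simp add: ann_class_def)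
    then have "y \<in> ann R x'" using assms by (auto simp: ann_def m_comm)
    then have "y \<in> ann R x" using that(1) by (simp add: ann_class_def)
    then show ?thesis using assms by (simp add: ann_def m_comm)
  qed
  moreover have "x \<in> ann_class R x" "y \<in> ann_class R y"
    using assms by (auto simp: ann_class_def)
  ultimately show ?thesis
    unfolding GE_adj_def using ann_class_eq_iff[OF assms] by blast
qed

lemma GE_fan_center:
  assumes "GE_fan R"
  obtains c where "c \<in> zdiv_star R"
    and "\<And>x y. x \<in> zdiv_star R \<Longrightarrow> y \<in> zdiv_star R \<Longrightarrow> ann R x \<noteq> ann R y \<Longrightarrow>
           x \<otimes> y = \<zero> \<longleftrightarrow> ann R x = ann R c \<or> ann R y = ann R c"
proof -
  obtain c where c: "c \<in> zdiv_star R" and fan: "\<forall>A \<in> GE_vertices R. \<forall>B \<in> GE_vertices R.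
      GE_adj R A B \<longleftrightarrow> A \<noteq> B \<and> (A = ann_class R c \<or> B = ann_class R c)"
    using assms unfolding GE_fan_def GE_vertices_def by blast
  have "x \<otimes> y = \<zero> \<longleftrightarrow> ann R x = ann R c \<or> ann R y = ann R c"
    if xy: "x \<in> zdiv_star R" "y \<in> zdiv_star R" "ann R x \<noteq> ann R y" for x y
  proof -
    have carrier: "x \<in> carrier R" "y \<in> carrier R" "c \<in> carrier R"
      using xy c by (auto dest: zdiv_starD)
    have "x \<otimes> y = \<zero> \<longleftrightarrow> GE_adj R (ann_class R x) (ann_class R y)"
      using GE_adj_ann_class_iff carrier xy(3) by simp
    also have "\<dots> \<longleftrightarrow> ann_class R x \<noteq> ann_class R y \<and>
        (ann_class R x = ann_class R c \<or> ann_class R y = ann_class R c)"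
      using fan xy(1,2) by (simp add: GE_vertices_def)
    also have "\<dots> \<longleftrightarrow> ann R x = ann R c \<or> ann R y = ann R c"
      using ann_class_eq_iff carrier xy(3) by simp
    finally show ?thesis .
  qed
  then show ?thesis using that c by blast
qed

end

text \<open>The fan graph read off on representatives: \<open>c\<close> represents the centre and
  \<open>y1, y2, y3\<close> three further vertices.\<close>

locale fan_zero_divisors = cring +
  fixes c y1 y2 y3 :: 'a
  assumes center: "c \<in> zdiv_star R"
    and fan: "\<And>x y. x \<in> zdiv_star R \<Longrightarrow> y \<in> zdiv_star R \<Longrightarrow> ann R x \<noteq> ann R y \<Longrightarrow>
                x \<otimes> y = \<zero> \<longleftrightarrow> ann R x = ann R c \<or> ann R y = ann R c"
    and zdiv_star_y: "y1 \<in> zdiv_star R" "y2 \<in> zdiv_star R" "y3 \<in> zdiv_star R"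
    and ann_y_not_center: "ann R y1 \<noteq> ann R c" "ann R y2 \<noteq> ann R c" "ann R y3 \<noteq> ann R c"
    and ann_y_distinct: "ann R y1 \<noteq> ann R y2" "ann R y1 \<noteq> ann R y3" "ann R y2 \<noteq> ann R y3"
begin

definition noncentral :: "'a \<Rightarrow> bool" where
  "noncentral x \<longleftrightarrow> x \<in> zdiv_star R \<and> ann R x \<noteq> ann R c"

lemma noncentral_y: "noncentral y1" "noncentral y2" "noncentral y3"
  using zdiv_star_y ann_y_not_center by (simp_all add: noncentral_def)

lemma noncentralD: "noncentral x \<Longrightarrow> x \<in> carrier R \<and> x \<noteq> \<zero>"
  unfolding noncentral_def by (simp add: zdiv_starD)

lemma center_carrier: "c \<in> carrier R" and center_nonzero: "c \<noteq> \<zero>"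
  using center by (simp_all add: zdiv_starD)

lemma noncentral_mult_center: "noncentral x \<Longrightarrow> x \<otimes> c = \<zero>"
  using fan[of x c] center by (simp add: noncentral_def)

lemma noncentral_mult_nonzero:
  "noncentral x \<Longrightarrow> noncentral y \<Longrightarrow> ann R x \<noteq> ann R y \<Longrightarrow> x \<otimes> y \<noteq> \<zero>"
  using fan[of x y] by (simp add: noncentral_def)

lemma ann_eq_of_mult_noncentral:
  assumes "noncentral d" "u \<in> carrier R" "u \<noteq> \<zero>" "ann R u \<noteq> ann R c" "u \<otimes> d = \<zero>"
  shows "ann R u = ann R d"
proof -
  have "noncentral u"
    using assms zdiv_starI[of u d] noncentralD by (simp add: noncentral_def)
  then show ?thesis using assms noncentral_mult_nonzero by blast
qed

text \<open>If \<open>c\<^sup>2 \<noteq> 0\<close> and some \<open>u \<noteq> 0\<close> kills both \<open>d\<close> and \<open>c\<close>, then \<open>d + c\<close> is a zero divisor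
  in the central class, so it is killed by every noncentral \<open>e\<close>; but \<open>e (d + c) = e d \<noteq> 0\<close>.\<close>

lemma ann_noncentral_inter_ann_center:
  assumes "c \<otimes> c \<noteq> \<zero>" and d: "noncentral d" and e: "noncentral e" "ann R d \<noteq> ann R e"
  shows "ann R d \<inter> ann R c = {\<zero>}"
proof -
  have "u = \<zero>" if "u \<in> ann R d \<inter> ann R c" for u
  proof (rule ccontr)
    assume "u \<noteq> \<zero>"
    from that have u: "u \<in> carrier R" "u \<otimes> d = \<zero>" "u \<otimes> c = \<zero>" by (simp_all add: mem_ann)
    define w where "w = d \<oplus> c"
    have carrier: "d \<in> carrier R" "e \<in> carrier R" "w \<in> carrier R"
      using d e noncentralD center_carrier by (simp_all add: w_def)
    have "w \<otimes> c = c \<otimes> c"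
      using noncentral_mult_center[OF d] carrier center_carrier by (simp add: w_def l_distr)
    then have "w \<otimes> c \<noteq> \<zero>" "w \<noteq> \<zero>" using assms(1) center_carrier by auto
    moreover have "w \<otimes> u = \<zero>"
    proof -
      have "u \<otimes> w = \<zero>" using u carrier center_carrier by (simp add: w_def r_distr)
      then show ?thesis using u carrier by (simp add: m_comm)
    qed
    ultimately have "w \<in> zdiv_star R" "\<not> noncentral w"
      using zdiv_starI[of w u] carrier u \<open>u \<noteq> \<zero>\<close> noncentral_mult_center by auto
    then have "ann R w = ann R c" by (simp add: noncentral_def)
    moreover have "e \<in> ann R c"
      using noncentral_mult_center[OF e(1)] carrier by (simp add: mem_ann)
    ultimately have "e \<in> ann R w" by simp
    then have "e \<otimes> w = \<zero>" by (simp add: mem_ann)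
    then have "e \<otimes> d = \<zero>"
      using carrier center_carrier noncentral_mult_center[OF e(1)]
      by (simp add: w_def r_distr m_comm[of e c])
    then show False using noncentral_mult_nonzero e d by (metis m_comm carrier(1,2))
  qed
  moreover have "\<zero> \<in> ann R d \<inter> ann R c" using center_carrier noncentralD[OF d] by (simp add: mem_ann)
  ultimately show ?thesis by blast
qed

lemma center_square_zero: "c \<otimes> c = \<zero>"
proof (rule ccontr)
  assume cc: "c \<otimes> c \<noteq> \<zero>"
  have "ann R a \<subseteq> ann R b" if ab: "noncentral a" "noncentral b" "ann R a \<noteq> ann R b" for a b
  proof
    fix u assume "u \<in> ann R a"
    then have u: "u \<in> carrier R" "u \<otimes> a = \<zero>" by (auto simp: mem_ann)
    have carrier: "a \<in> carrier R" "b \<in> carrier R" using ab noncentralD by auto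
    have "(u \<otimes> b) \<otimes> a = \<zero>" using u carrier by (metis l_null m_assoc m_comm)
    moreover have "(u \<otimes> b) \<otimes> c = \<zero>"
      using noncentral_mult_center[OF ab(2)] u carrier center_carrier by (simp add: m_assoc)
    ultimately have "u \<otimes> b \<in> ann R a \<inter> ann R c" using u carrier by (simp add: mem_ann)
    then have "u \<otimes> b = \<zero>" using ann_noncentral_inter_ann_center[OF cc ab] by blast
    then show "u \<in> ann R b" using u by (simp add: mem_ann)
  qed
  then show False using noncentral_y ann_y_distinct(1) by blast
qed

lemma zdiv_star_mult_center:
  assumes "x \<in> zdiv_star R"
  shows "x \<otimes> c = \<zero>"
proof (cases "noncentral x")
  case False
  then have "ann R x = ann R c" using assms by (simp add: noncentral_def)
  moreover have "c \<in> ann R c" using center_square_zero center_carrier by (simp add: mem_ann)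
  ultimately have "c \<in> ann R x" by simp
  then have "c \<otimes> x = \<zero>" by (simp add: mem_ann)
  then show ?thesis using assms center_carrier zdiv_starD m_comm by metis
qed (rule noncentral_mult_center)

lemma primeideal_ann_center: "primeideal (ann R c) R"
proof (rule primeidealI[OF ideal_ann[OF center_carrier] is_cring])
  show "carrier R \<noteq> ann R c"
  proof
    assume "carrier R = ann R c"
    then have "\<one> \<otimes> c = \<zero>" using one_closed by (metis mem_ann)
    then show False using center_carrier center_nonzero by simp
  qed
  show "a \<in> ann R c \<or> b \<in> ann R c"
    if ab: "a \<in> carrier R" "b \<in> carrier R" "a \<otimes> b \<in> ann R c" for a b
  proof (cases "a = \<zero> \<or> b \<otimes> c = \<zero>")
    case True
    then show ?thesis using ab center_carrier by (auto simp: ann_def)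
  next
    case False
    then have "a \<otimes> (b \<otimes> c) = \<zero>" using ab center_carrier by (simp add: ann_def m_assoc)
    then have "a \<in> zdiv_star R" using False ab center_carrier by (auto intro: zdiv_starI)
    then show ?thesis using ab zdiv_star_mult_center by (simp add: ann_def)
  qed
qed

definition center_or_zero :: "'a set" where
  "center_or_zero = {u \<in> carrier R. u = \<zero> \<or> ann R u = ann R c}"

lemma center_or_zero_mult_ann_center:
  assumes "u \<in> center_or_zero" "a \<in> ann R c"
  shows "u \<otimes> a = \<zero>"
proof (cases "u = \<zero>")
  case False
  then have "a \<in> ann R u" using assms by (simp add: center_or_zero_def)
  then show ?thesis using assms(1) by (simp add: center_or_zero_def mem_ann m_comm)
qed (use assms in \<open>simp add: mem_ann\<close>)

lemma ann_eq_center_or_zero: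
  assumes d: "noncentral d" "d \<otimes> d \<noteq> \<zero>"
  shows "ann R d = center_or_zero"
proof
  have carrier: "d \<in> carrier R" using d noncentralD by simp
  show "ann R d \<subseteq> center_or_zero"
  proof
    fix u assume "u \<in> ann R d"
    then have u: "u \<in> carrier R" "u \<otimes> d = \<zero>" by (auto simp: mem_ann)
    show "u \<in> center_or_zero"
    proof (rule ccontr)
      assume "u \<notin> center_or_zero"
      then have "u \<noteq> \<zero>" "ann R u \<noteq> ann R c" using u by (auto simp: center_or_zero_def)
      then have "ann R u = ann R d" using ann_eq_of_mult_noncentral d u by blast
      moreover have "d \<in> ann R u" using u carrier by (simp add: mem_ann m_comm)
      ultimately show False using d by (simp add: mem_ann)
    qed
  qed
  have "d \<in> ann R c" using d zdiv_star_mult_center carrier by (simp add: mem_ann noncentral_def)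
  show "center_or_zero \<subseteq> ann R d"
  proof
    fix u assume u: "u \<in> center_or_zero"
    then have "u \<otimes> d = \<zero>" using center_or_zero_mult_ann_center \<open>d \<in> ann R c\<close> by blast
    then show "u \<in> ann R d" using u by (simp add: center_or_zero_def mem_ann)
  qed
qed

lemma noncentral_square_nonzero_unique:
  "noncentral d \<Longrightarrow> noncentral e \<Longrightarrow> d \<otimes> d \<noteq> \<zero> \<Longrightarrow> e \<otimes> e \<noteq> \<zero> \<Longrightarrow> ann R d = ann R e"
  by (simp add: ann_eq_center_or_zero)

lemma obtain_two_noncentral:
  assumes "\<And>a b. noncentral a \<Longrightarrow> noncentral b \<Longrightarrow> ann R a \<noteq> ann R b \<Longrightarrow> Q a \<or> Q b"
  obtains e f where "noncentral e" "noncentral f" "ann R e \<noteq> ann R f" "Q e" "Q f"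
proof (cases "Q y1")
  case True
  show ?thesis
  proof (cases "Q y2")
    case False
    then have "Q y3" using assms[OF noncentral_y(2,3) ann_y_distinct(3)] by blast
    then show ?thesis using that \<open>Q y1\<close> noncentral_y ann_y_distinct(2) by blast
  qed (use that \<open>Q y1\<close> noncentral_y ann_y_distinct(1) in blast)
next
  case False
  then have "Q y2" "Q y3"
    using assms[OF noncentral_y(1,2) ann_y_distinct(1)] assms[OF noncentral_y(1,3) ann_y_distinct(2)]
    by blast+
  then show ?thesis using that noncentral_y ann_y_distinct(3) by blast
qed

lemma Ass_eq_ann_center: "Ass R = {ann R c}"
proof
  show "{ann R c} \<subseteq> Ass R"
    using primeideal_ann_center center_carrier by (auto simp: Ass_def)
  show "Ass R \<subseteq> {ann R c}"
  proof
    fix P assume "P \<in> Ass R"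
    then obtain y where P: "primeideal P R" and y: "y \<in> carrier R" "P = ann R y"
      by (auto simp: Ass_def)
    have prime: "a \<in> P \<or> b \<in> P" if "a \<in> carrier R" "b \<in> carrier R" "a \<otimes> b \<in> P" for a b
      using primeideal.I_prime[OF P] that by blast
    have zero: "\<zero> \<in> P" using y by (simp add: mem_ann)
    have "c \<in> P" using prime[of c c] center_square_zero center_carrier zero by auto
    then have "c \<otimes> y = \<zero>" using y by (simp add: mem_ann)
    moreover have "y \<noteq> \<zero>"
    proof
      assume "y = \<zero>"
      then have "P = carrier R" using y by (auto simp: mem_ann)
      then show False using primeideal.I_notcarr[OF P] by simp
    qed
    ultimately have y_zdiv: "y \<in> zdiv_star R"
      using zdiv_starI[of y c] y center_carrier center_nonzero by (simp add: m_comm)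
    have "\<not> noncentral y"
    proof
      assume "noncentral y"
      have square_nonzero: "d \<otimes> d \<noteq> \<zero>" if "noncentral d" "ann R d \<noteq> ann R y" for d
      proof -
        have "d \<notin> P"
          using noncentral_mult_nonzero[OF that(1) \<open>noncentral y\<close> that(2)] that(1) noncentralD y
          by (simp add: mem_ann)
        then have "d \<otimes> d \<notin> P" using prime that(1) noncentralD by blast
        then show ?thesis using zero by auto
      qed
      obtain e f where ef: "noncentral e" "noncentral f" "ann R e \<noteq> ann R f"
        and "ann R e \<noteq> ann R y" "ann R f \<noteq> ann R y"
        by (rule obtain_two_noncentral[where Q = "\<lambda>a. ann R a \<noteq> ann R y"]) auto
      then have "e \<otimes> e \<noteq> \<zero>" "f \<otimes> f \<noteq> \<zero>" using square_nonzero by blast+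
      then show False using noncentral_square_nonzero_unique ef by blast
    qed
    then show "P \<in> {ann R c}" using y y_zdiv by (simp add: noncentral_def)
  qed
qed

definition square_zero_pair :: "'a \<Rightarrow> 'a \<Rightarrow> bool" where
  "square_zero_pair e f \<longleftrightarrow> noncentral e \<and> noncentral f \<and> ann R e \<noteq> ann R f \<and>
     e \<otimes> e = \<zero> \<and> f \<otimes> f = \<zero>"

lemma obtain_square_zero_pair:
  obtains e f where "square_zero_pair e f"
proof -
  obtain e f where "noncentral e" "noncentral f" "ann R e \<noteq> ann R f"
    "e \<otimes> e = \<zero>" "f \<otimes> f = \<zero>"
    by (rule obtain_two_noncentral[where Q = "\<lambda>a. a \<otimes> a = \<zero>"])
      (use noncentral_square_nonzero_unique in blast)
  then show ?thesis using that by (simp add: square_zero_pair_def)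
qed

lemma center_or_zero_of_mult_noncentral:
  assumes e: "noncentral e" and f: "noncentral f" "ann R e \<noteq> ann R f"
    and z: "z \<in> carrier R" "e \<otimes> z = \<zero>" "f \<otimes> z = \<zero>"
  shows "z \<in> center_or_zero"
proof (rule ccontr)
  assume "z \<notin> center_or_zero"
  then have "z \<noteq> \<zero>" "ann R z \<noteq> ann R c" using z by (auto simp: center_or_zero_def)
  moreover have "z \<otimes> e = \<zero>" "z \<otimes> f = \<zero>" using z e f noncentralD by (simp_all add: m_comm)
  ultimately have "ann R z = ann R e" "ann R z = ann R f"
    using ann_eq_of_mult_noncentral e f z(1) by blast+
  then show False using f(2) by simp
qed

lemma square_zero_pair_mult_central:
  assumes "square_zero_pair e f"
  shows "e \<otimes> f \<noteq> \<zero>" "ann R (e \<otimes> f) = ann R c"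
proof -
  have e: "noncentral e" "e \<in> carrier R" "e \<otimes> e = \<zero>" and f: "noncentral f" "f \<in> carrier R" "f \<otimes> f = \<zero>"
    and ef: "ann R e \<noteq> ann R f"
    using assms noncentralD by (auto simp: square_zero_pair_def)
  show "e \<otimes> f \<noteq> \<zero>" using noncentral_mult_nonzero e f ef by blast
  moreover have "e \<otimes> f \<in> center_or_zero"
  proof (rule center_or_zero_of_mult_noncentral[OF e(1) f(1) ef])
    show "e \<otimes> (e \<otimes> f) = \<zero>" using e f by (simp add: m_assoc[symmetric])
    show "f \<otimes> (e \<otimes> f) = \<zero>" using e f by (simp add: m_lcomm)
  qed (use e f in simp)
  ultimately show "ann R (e \<otimes> f) = ann R c" by (simp add: center_or_zero_def)
qed

lemma ann_center_mult_center_or_zero: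
  assumes a: "a \<in> ann R c" and b: "b \<in> ann R c"
  shows "a \<otimes> b \<in> center_or_zero"
proof -
  obtain e f where pair: "square_zero_pair e f" by (rule obtain_square_zero_pair)
  then have e: "noncentral e" "e \<in> carrier R" "e \<otimes> e = \<zero>" and f: "noncentral f" "f \<in> carrier R" "f \<otimes> f = \<zero>"
    and ef: "ann R e \<noteq> ann R f"
    using noncentralD by (auto simp: square_zero_pair_def)
  have "e \<otimes> f \<in> center_or_zero"
    using square_zero_pair_mult_central[OF pair] e f by (simp add: center_or_zero_def)
  then have ef_kills: "(e \<otimes> f) \<otimes> x = \<zero>" if "x \<in> ann R c" for x
    using center_or_zero_mult_ann_center that by blast
  have mult_pair: "x \<otimes> e \<in> center_or_zero \<and> x \<otimes> f \<in> center_or_zero" if x: "x \<in> ann R c" for x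
  proof -
    have "x \<in> carrier R" using x by (simp add: mem_ann)
    moreover have "e \<otimes> (x \<otimes> e) = \<zero>" "f \<otimes> (x \<otimes> f) = \<zero>"
      using e f \<open>x \<in> carrier R\<close> m_lcomm[of e x e] m_lcomm[of f x f] by simp_all
    moreover have "f \<otimes> (x \<otimes> e) = \<zero>" "e \<otimes> (x \<otimes> f) = \<zero>"
      using ef_kills[OF x] e f \<open>x \<in> carrier R\<close> by (simp add: m_ac)+
    ultimately show ?thesis
      using center_or_zero_of_mult_noncentral[OF e(1) f(1) ef] e f by simp
  qed
  have ab: "a \<in> carrier R" "b \<in> carrier R" using a b by (simp_all add: mem_ann)
  have "e \<otimes> (a \<otimes> b) = (b \<otimes> e) \<otimes> a" "f \<otimes> (a \<otimes> b) = (b \<otimes> f) \<otimes> a"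
    using ab e f by (simp add: m_ac)+
  then have "e \<otimes> (a \<otimes> b) = \<zero>" "f \<otimes> (a \<otimes> b) = \<zero>"
    using mult_pair[OF b] center_or_zero_mult_ann_center a by simp_all
  then show ?thesis using center_or_zero_of_mult_noncentral[OF e(1) f(1) ef] ab by simp
qed

lemma ann_center_cube: "ann R c \<cdot> ann R c \<cdot> ann R c = {\<zero>}"
  using ideal_triple_prod_eq_zero[OF ideal_ann[OF center_carrier]]
    ann_center_mult_center_or_zero center_or_zero_mult_ann_center
  by blast

lemma one_neq_zero: "\<one> \<noteq> \<zero>"
  using center_carrier center_nonzero by (metis l_null l_one)

lemma square_zero_of_mult_zero:
  assumes uv: "u \<in> carrier R" "v \<in> carrier R" "u \<otimes> v = \<zero>" "v \<noteq> \<zero>"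
    and a: "a \<in> ann R c" "a \<otimes> u \<noteq> \<zero>" "a \<otimes> v \<noteq> \<zero>"
  shows "u \<otimes> u = \<zero>"
proof -
  have "u \<noteq> \<zero>" using a uv by (auto simp: mem_ann)
  then have zdiv: "u \<in> zdiv_star R" "v \<in> zdiv_star R"
    using uv zdiv_starI[of u v] zdiv_starI[of v u] by (simp_all add: m_comm)
  have "ann R x \<noteq> ann R c" if "x \<in> carrier R" "a \<otimes> x \<noteq> \<zero>" for x
    using that a(1) by (auto simp: mem_ann)
  then have "noncentral u" "noncentral v" using zdiv uv a by (simp_all add: noncentral_def)
  then have "ann R u = ann R v" using noncentral_mult_nonzero uv(3) by blast
  moreover have "u \<in> ann R v" using uv by (simp add: mem_ann)
  ultimately have "u \<in> ann R u" by simp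
  then show ?thesis by (simp add: mem_ann)
qed

text \<open>For a square-zero pair \<open>e, f\<close>, the elements \<open>e + f\<close> and \<open>e - f\<close> multiply to zero,
  so \<open>(e + f)\<^sup>2 = 2 e f\<close> vanishes while \<open>e f\<close> lies in the central class.\<close>

lemma two_in_ann_center: "\<one> \<oplus> \<one> \<in> ann R c"
proof -
  obtain e f where pair: "square_zero_pair e f" by (rule obtain_square_zero_pair)
  then have carrier: "e \<in> carrier R" "f \<in> carrier R" and sq: "e \<otimes> e = \<zero>" "f \<otimes> f = \<zero>"
    and ef: "ann R e \<noteq> ann R f" and "noncentral e"
    using noncentralD by (auto simp: square_zero_pair_def)
  have ef_nonzero: "e \<otimes> f \<noteq> \<zero>" and ann_ef: "ann R (e \<otimes> f) = ann R c"
    using square_zero_pair_mult_central[OF pair] by simp_all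
  have "(e \<oplus> f) \<otimes> (e \<ominus> f) = e \<otimes> e \<ominus> f \<otimes> f"
    using carrier by algebra
  moreover have "e \<ominus> f \<noteq> \<zero>" using carrier ef by (metis r_right_minus_eq)
  moreover have "e \<otimes> (e \<oplus> f) = e \<otimes> f" "e \<otimes> (e \<ominus> f) = \<ominus> (e \<otimes> f)"
    using carrier sq by (simp_all add: r_distr r_minus minus_eq)
  moreover have "e \<in> ann R c"
    using \<open>noncentral e\<close> noncentral_mult_center carrier by (simp add: mem_ann)
  ultimately have "(e \<oplus> f) \<otimes> (e \<oplus> f) = \<zero>"
    using square_zero_of_mult_zero[of "e \<oplus> f" "e \<ominus> f" e] carrier sq ef_nonzero by simp
  moreover have "(e \<oplus> f) \<otimes> (e \<oplus> f) = (\<one> \<oplus> \<one>) \<otimes> (e \<otimes> f)"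
    using carrier sq by algebra
  ultimately have "\<one> \<oplus> \<one> \<in> ann R (e \<otimes> f)" by (simp add: mem_ann)
  then show ?thesis using ann_ef by simp
qed

lemma add_pow_eight_one: "add_pow R (8::nat) \<one> = \<zero>"
proof -
  have two: "add_pow R (2::nat) \<one> \<in> ann R c"
    using two_in_ann_center by (simp add: numeral_2_eq_2)
  have "add_pow R (8::nat) \<one> = add_pow R (2::nat) \<one> \<otimes> add_pow R (2::nat) \<one> \<otimes> add_pow R (2::nat) \<one>"
    by (simp add: add_pow_one_mult)
  also have "\<dots> = \<zero>"
    using ann_center_mult_center_or_zero[OF two two] center_or_zero_mult_ann_center two by blast
  finally show ?thesis .
qed

end

lemma (in cring) GE_fan_imp_fan_zero_divisors:
  assumes "GE_fan R" and "infinite (GE_vertices R) \<or> card (GE_vertices R) \<ge> 4"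
  obtains c y1 y2 y3 where "fan_zero_divisors R c y1 y2 y3"
proof -
  obtain c where c: "c \<in> zdiv_star R"
    and fan: "\<And>x y. x \<in> zdiv_star R \<Longrightarrow> y \<in> zdiv_star R \<Longrightarrow> ann R x \<noteq> ann R y \<Longrightarrow>
                x \<otimes> y = \<zero> \<longleftrightarrow> ann R x = ann R c \<or> ann R y = ann R c"
    using GE_fan_center[OF assms(1)] by blast
  have "ann_class R c \<in> GE_vertices R" using c by (simp add: GE_vertices_def)
  then obtain A B C where ABC: "{A, B, C} \<subseteq> GE_vertices R - {ann_class R c}" "A \<noteq> B" "A \<noteq> C" "B \<noteq> C"
    using obtain_three_other_elements assms(2) by metis
  then obtain y1 y2 y3 where y: "y1 \<in> zdiv_star R" "y2 \<in> zdiv_star R" "y3 \<in> zdiv_star R"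
    and classes: "A = ann_class R y1" "B = ann_class R y2" "C = ann_class R y3"
    by (auto simp: GE_vertices_def)
  have "y1 \<in> carrier R" "y2 \<in> carrier R" "y3 \<in> carrier R" "c \<in> carrier R"
    using y c zdiv_starD by auto
  then have "ann R y1 \<noteq> ann R c" "ann R y2 \<noteq> ann R c" "ann R y3 \<noteq> ann R c"
    "ann R y1 \<noteq> ann R y2" "ann R y1 \<noteq> ann R y3" "ann R y2 \<noteq> ann R y3"
    using ABC classes ann_class_eq_iff by auto
  then have "fan_zero_divisors R c y1 y2 y3"
    using c y by unfold_locales (simp_all add: fan)
  then show ?thesis using that by blast
qed

theorem proposition2p4:
  fixes R :: "('a, 'b) ring_scheme"
  assumes "cring R" and "noetherian_ring R"
    and "GE_fan R"
    and "infinite (GE_vertices R) \<or> card (GE_vertices R) \<ge> 4"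
  shows "\<exists>p. Ass R = {p}
           \<and> p \<cdot>\<^bsub>R\<^esub> p \<cdot>\<^bsub>R\<^esub> p = {\<zero>\<^bsub>R\<^esub>}
           \<and> ring_char R \<in> {2, 4, 8}"
proof -
  interpret cring R by fact
  obtain c y1 y2 y3 where "fan_zero_divisors R c y1 y2 y3"
    using GE_fan_imp_fan_zero_divisors[OF assms(3,4)] .
  then interpret fan_zero_divisors R c y1 y2 y3 .
  have "ring_char R \<in> {2, 4, 8}"
    using ring_char_in_2_4_8 one_neq_zero add_pow_eight_one by blast
  then show ?thesis using Ass_eq_ann_center ann_center_cube by blast
qed

end
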